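(* Let $\mathcal C$ be a category, $I:\mathcal B\to\mathcal C$ the inclusion of a full subcategory with a left adjoint $S:\mathcal C\to\mathcal B$, with unit $\alpha:1_{\mathcal C}\to IS$ and counit $\beta:SI\xrightarrow{\cong}1_{\mathcal B}$, and $J:\mathcal D\to\mathcal C$ the inclusion of a full subcategory with a right adjoint $T:\mathcal C\to\mathcal D$, with unit $\delta:1_{\mathcal D}\xrightarrow{\cong}TJ$ and counit $\epsilon:JT\to1_{\mathcal C}$. Suppose that the natural transformations $IS\epsilon:ISJT\to IS$ and $JT\alpha:JT\to JTIS$ are isomorphisms. Then the endofunctor $JT:\mathcal C\to\mathcal C$ is left adjoint to the endofunctor $IS:\mathcal C\to\mathcal C$. *)

theory Defs
  imports Main
begin

text \<open>A category is given by a set of objects, a set of arrows, domain/codomain maps,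
identities and composition (Cmp C g f is "g after f").\<close>

record ('o, 'm) cat =
  Obj :: "'o set"
  Arr :: "'m set"
  Dom :: "'m \<Rightarrow> 'o"
  Cod :: "'m \<Rightarrow> 'o"
  Ide :: "'o \<Rightarrow> 'm"
  Cmp :: "'m \<Rightarrow> 'm \<Rightarrow> 'm"

definition hom :: "('o, 'm) cat \<Rightarrow> 'o \<Rightarrow> 'o \<Rightarrow> 'm set" where
  "hom C a b = {f \<in> Arr C. Dom C f = a \<and> Cod C f = b}"

definition is_category :: "('o, 'm) cat \<Rightarrow> bool" where
  "is_category C \<longleftrightarrow>
     (\<forall>f\<in>Arr C. Dom C f \<in> Obj C \<and> Cod C f \<in> Obj C) \<and>
     (\<forall>a\<in>Obj C. Ide C a \<in> hom C a a) \<and>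
     (\<forall>f\<in>Arr C. \<forall>g\<in>Arr C. Cod C f = Dom C g \<longrightarrow>
         Cmp C g f \<in> hom C (Dom C f) (Cod C g)) \<and>
     (\<forall>f\<in>Arr C. Cmp C (Ide C (Cod C f)) f = f \<and> Cmp C f (Ide C (Dom C f)) = f) \<and>
     (\<forall>f\<in>Arr C. \<forall>g\<in>Arr C. \<forall>h\<in>Arr C. Cod C f = Dom C g \<and> Cod C g = Dom C h \<longrightarrow>
         Cmp C h (Cmp C g f) = Cmp C (Cmp C h g) f)"

record ('o1, 'm1, 'o2, 'm2) ftor =
  FO :: "'o1 \<Rightarrow> 'o2"
  FA :: "'m1 \<Rightarrow> 'm2"

definition is_functor :: "('o1, 'm1) cat \<Rightarrow> ('o2, 'm2) cat \<Rightarrow> ('o1, 'm1, 'o2, 'm2) ftor \<Rightarrow> bool" where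
  "is_functor C D F \<longleftrightarrow> is_category C \<and> is_category D \<and>
     (\<forall>a\<in>Obj C. FO F a \<in> Obj D) \<and>
     (\<forall>f\<in>Arr C. FA F f \<in> hom D (FO F (Dom C f)) (FO F (Cod C f))) \<and>
     (\<forall>a\<in>Obj C. FA F (Ide C a) = Ide D (FO F a)) \<and>
     (\<forall>f\<in>Arr C. \<forall>g\<in>Arr C. Cod C f = Dom C g \<longrightarrow>
         FA F (Cmp C g f) = Cmp D (FA F g) (FA F f))"

definition id_ftor :: "('o, 'm, 'o, 'm) ftor" where
  "id_ftor = \<lparr>FO = id, FA = id\<rparr>"

definition comp_ftor :: "('o2, 'm2, 'o3, 'm3) ftor \<Rightarrow> ('o1, 'm1, 'o2, 'm2) ftor \<Rightarrow> ('o1, 'm1, 'o3, 'm3) ftor"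
  (infixl "\<circ>\<^sub>F" 55) where
  "G \<circ>\<^sub>F F = \<lparr>FO = FO G \<circ> FO F, FA = FA G \<circ> FA F\<rparr>"

definition is_nat_trans :: "('o1, 'm1) cat \<Rightarrow> ('o2, 'm2) cat \<Rightarrow> ('o1, 'm1, 'o2, 'm2) ftor \<Rightarrow>
    ('o1, 'm1, 'o2, 'm2) ftor \<Rightarrow> ('o1 \<Rightarrow> 'm2) \<Rightarrow> bool" where
  "is_nat_trans C D F G \<tau> \<longleftrightarrow> is_functor C D F \<and> is_functor C D G \<and>
     (\<forall>a\<in>Obj C. \<tau> a \<in> hom D (FO F a) (FO G a)) \<and>
     (\<forall>f\<in>Arr C. Cmp D (\<tau> (Cod C f)) (FA F f) = Cmp D (FA G f) (\<tau> (Dom C f)))"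

definition is_iso :: "('o, 'm) cat \<Rightarrow> 'm \<Rightarrow> bool" where
  "is_iso D f \<longleftrightarrow> f \<in> Arr D \<and>
     (\<exists>g\<in>hom D (Cod D f) (Dom D f). Cmp D g f = Ide D (Dom D f) \<and> Cmp D f g = Ide D (Cod D f))"

definition is_nat_iso :: "('o1, 'm1) cat \<Rightarrow> ('o2, 'm2) cat \<Rightarrow> ('o1, 'm1, 'o2, 'm2) ftor \<Rightarrow>
    ('o1, 'm1, 'o2, 'm2) ftor \<Rightarrow> ('o1 \<Rightarrow> 'm2) \<Rightarrow> bool" where
  "is_nat_iso C D F G \<tau> \<longleftrightarrow> is_nat_trans C D F G \<tau> \<and> (\<forall>a\<in>Obj C. is_iso D (\<tau> a))"

definition whisker_left :: "('o2, 'm2, 'o3, 'm3) ftor \<Rightarrow> ('o1 \<Rightarrow> 'm2) \<Rightarrow> ('o1 \<Rightarrow> 'm3)" where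
  "whisker_left H \<tau> = (\<lambda>a. FA H (\<tau> a))"

definition whisker_right :: "('o2 \<Rightarrow> 'm3) \<Rightarrow> ('o1, 'm1, 'o2, 'm2) ftor \<Rightarrow> ('o1 \<Rightarrow> 'm3)" where
  "whisker_right \<tau> K = (\<lambda>a. \<tau> (FO K a))"

definition is_adjunction :: "('o1, 'm1) cat \<Rightarrow> ('o2, 'm2) cat \<Rightarrow> ('o1, 'm1, 'o2, 'm2) ftor \<Rightarrow>
    ('o2, 'm2, 'o1, 'm1) ftor \<Rightarrow> ('o1 \<Rightarrow> 'm1) \<Rightarrow> ('o2 \<Rightarrow> 'm2) \<Rightarrow> bool" where
  "is_adjunction C D F G \<eta> \<epsilon> \<longleftrightarrow>
     is_functor C D F \<and> is_functor D C G \<and>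
     is_nat_trans C C id_ftor (G \<circ>\<^sub>F F) \<eta> \<and>
     is_nat_trans D D (F \<circ>\<^sub>F G) id_ftor \<epsilon> \<and>
     (\<forall>a\<in>Obj C. Cmp D (\<epsilon> (FO F a)) (FA F (\<eta> a)) = Ide D (FO F a)) \<and>
     (\<forall>b\<in>Obj D. Cmp C (FA G (\<epsilon> b)) (\<eta> (FO G b)) = Ide C (FO G b))"

definition full_subcat :: "('o, 'm) cat \<Rightarrow> 'o set \<Rightarrow> ('o, 'm) cat" where
  "full_subcat C B = \<lparr>Obj = B, Arr = {f \<in> Arr C. Dom C f \<in> B \<and> Cod C f \<in> B},
     Dom = Dom C, Cod = Cod C, Ide = Ide C, Cmp = Cmp C\<rparr>"

definition incl :: "('o, 'm, 'o, 'm) ftor" where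
  "incl = \<lparr>FO = id, FA = id\<rparr>"

end

theory Submission
  imports Defs
begin

text \<open>The reflector \<open>R = IS\<close> with its unit \<open>\<alpha>\<close> is an idempotent pointed endofunctor:
\<open>R\<alpha> = \<alpha>R\<close>, and \<open>\<alpha>R\<close> is invertible with inverse \<open>\<beta>S\<close>. Dually the coreflector
\<open>L = JT\<close> with counit \<open>\<epsilon>\<close> satisfies \<open>L\<epsilon> = \<epsilon>L\<close> with \<open>\<epsilon>L\<close> invertible. Under the hypothesis
that \<open>R\<epsilon>\<close> and \<open>L\<alpha>\<close> are invertible, \<open>(R\<epsilon>)\<^sup>-\<^sup>1 \<circ> \<alpha> : 1 \<Rightarrow> RL\<close> and
\<open>\<epsilon> \<circ> (L\<alpha>)\<^sup>-\<^sup>1 : LR \<Rightarrow> 1\<close> are natural, and each triangle composite is, by naturality of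
\<open>\<alpha>\<close> at \<open>\<epsilon>\<close> (resp. of \<open>\<epsilon>\<close> at \<open>\<alpha>\<close>), a one-sided inverse of the invertible arrow
\<open>\<epsilon>L\<close> (resp. \<open>\<alpha>R\<close>), hence an identity.\<close>

locale category =
  fixes C :: "('o, 'm) cat"
  assumes is_category: "is_category C"
begin

lemma Dom_in_Obj [simp]: "f \<in> Arr C \<Longrightarrow> Dom C f \<in> Obj C"
  and Cod_in_Obj [simp]: "f \<in> Arr C \<Longrightarrow> Cod C f \<in> Obj C"
  using is_category unfolding is_category_def by blast+

lemma Ide_in_Arr [simp]: "a \<in> Obj C \<Longrightarrow> Ide C a \<in> Arr C"
  and Dom_Ide [simp]: "a \<in> Obj C \<Longrightarrow> Dom C (Ide C a) = a"
  and Cod_Ide [simp]: "a \<in> Obj C \<Longrightarrow> Cod C (Ide C a) = a"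
  using is_category unfolding is_category_def hom_def by blast+

lemma Cmp_in_Arr [simp]: "f \<in> Arr C \<Longrightarrow> g \<in> Arr C \<Longrightarrow> Cod C f = Dom C g \<Longrightarrow> Cmp C g f \<in> Arr C"
  and Dom_Cmp [simp]: "f \<in> Arr C \<Longrightarrow> g \<in> Arr C \<Longrightarrow> Cod C f = Dom C g \<Longrightarrow> Dom C (Cmp C g f) = Dom C f"
  and Cod_Cmp [simp]: "f \<in> Arr C \<Longrightarrow> g \<in> Arr C \<Longrightarrow> Cod C f = Dom C g \<Longrightarrow> Cod C (Cmp C g f) = Cod C g"
  using is_category unfolding is_category_def hom_def by blast+

lemma Cmp_Ide_left [simp]: "f \<in> Arr C \<Longrightarrow> Cod C f = b \<Longrightarrow> Cmp C (Ide C b) f = f"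
  and Cmp_Ide_right [simp]: "f \<in> Arr C \<Longrightarrow> Dom C f = a \<Longrightarrow> Cmp C f (Ide C a) = f"
  using is_category unfolding is_category_def by blast+

lemma Cmp_assoc [simp]:
  "f \<in> Arr C \<Longrightarrow> g \<in> Arr C \<Longrightarrow> h \<in> Arr C \<Longrightarrow> Cod C f = Dom C g \<Longrightarrow> Cod C g = Dom C h \<Longrightarrow>
    Cmp C (Cmp C h g) f = Cmp C h (Cmp C g f)"
  using is_category unfolding is_category_def by metis

end

definition inverse_arr :: "('o, 'm) cat \<Rightarrow> 'm \<Rightarrow> 'm" where
  "inverse_arr C f = (SOME g. g \<in> hom C (Cod C f) (Dom C f) \<and>
     Cmp C g f = Ide C (Dom C f) \<and> Cmp C f g = Ide C (Cod C f))"

context category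
begin

lemma inverse_arr [simp]:
  assumes "is_iso C f"
  shows "inverse_arr C f \<in> Arr C"
    and "Dom C (inverse_arr C f) = Cod C f"
    and "Cod C (inverse_arr C f) = Dom C f"
    and "Cmp C (inverse_arr C f) f = Ide C (Dom C f)"
    and "Cmp C f (inverse_arr C f) = Ide C (Cod C f)"
proof -
  have "\<exists>g. g \<in> hom C (Cod C f) (Dom C f) \<and> Cmp C g f = Ide C (Dom C f) \<and> Cmp C f g = Ide C (Cod C f)"
    using assms unfolding is_iso_def by blast
  from someI_ex[OF this] show "inverse_arr C f \<in> Arr C"
    and "Dom C (inverse_arr C f) = Cod C f" and "Cod C (inverse_arr C f) = Dom C f"
    and "Cmp C (inverse_arr C f) f = Ide C (Dom C f)" and "Cmp C f (inverse_arr C f) = Ide C (Cod C f)"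
    unfolding inverse_arr_def hom_def by blast+
qed

lemma left_inverse_eq_inverse_arr:
  assumes f: "is_iso C f" and g: "g \<in> Arr C" "Dom C g = Cod C f"
    and gf: "Cmp C g f = Ide C (Dom C f)"
  shows "g = inverse_arr C f"
proof -
  have "f \<in> Arr C" using f unfolding is_iso_def by blast
  then have "g = Cmp C g (Cmp C f (inverse_arr C f))" using f g by simp
  also have "\<dots> = Cmp C (Cmp C g f) (inverse_arr C f)" using f g \<open>f \<in> Arr C\<close> by simp
  finally show ?thesis using f \<open>f \<in> Arr C\<close> by (simp add: gf)
qed

lemma right_inverse_eq_inverse_arr:
  assumes f: "is_iso C f" and g: "g \<in> Arr C" "Cod C g = Dom C f"
    and fg: "Cmp C f g = Ide C (Cod C f)"
  shows "g = inverse_arr C f"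
proof -
  have "f \<in> Arr C" using f unfolding is_iso_def by blast
  then have "g = Cmp C (Cmp C (inverse_arr C f) f) g" using f g by simp
  also have "\<dots> = Cmp C (inverse_arr C f) (Cmp C f g)"
    using f g \<open>f \<in> Arr C\<close> by (intro Cmp_assoc) simp_all
  finally show ?thesis using f \<open>f \<in> Arr C\<close> by (simp add: fg)
qed

end

locale cat_functor =
  fixes C :: "('o1, 'm1) cat" and D :: "('o2, 'm2) cat" and F :: "('o1, 'm1, 'o2, 'm2) ftor"
  assumes is_functor: "is_functor C D F"
begin

sublocale dom: category C
  using is_functor unfolding is_functor_def category_def by blast

sublocale cod: category D
  using is_functor unfolding is_functor_def category_def by blast

lemma FO_in_Obj [simp]: "a \<in> Obj C \<Longrightarrow> FO F a \<in> Obj D"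
  using is_functor unfolding is_functor_def by blast

lemma FA_in_Arr [simp]: "f \<in> Arr C \<Longrightarrow> FA F f \<in> Arr D"
  and Dom_FA [simp]: "f \<in> Arr C \<Longrightarrow> Dom D (FA F f) = FO F (Dom C f)"
  and Cod_FA [simp]: "f \<in> Arr C \<Longrightarrow> Cod D (FA F f) = FO F (Cod C f)"
  using is_functor unfolding is_functor_def hom_def by blast+

lemma FA_Ide [simp]: "a \<in> Obj C \<Longrightarrow> FA F (Ide C a) = Ide D (FO F a)"
  using is_functor unfolding is_functor_def by blast

lemma FA_Cmp:
  "f \<in> Arr C \<Longrightarrow> g \<in> Arr C \<Longrightarrow> Cod C f = Dom C g \<Longrightarrow> FA F (Cmp C g f) = Cmp D (FA F g) (FA F f)"
  using is_functor unfolding is_functor_def by blast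

end

lemma FO_comp_ftor [simp]: "FO (G \<circ>\<^sub>F F) = FO G \<circ> FO F"
  and FA_comp_ftor [simp]: "FA (G \<circ>\<^sub>F F) = FA G \<circ> FA F"
  by (simp_all add: comp_ftor_def)

lemma FO_id_ftor [simp]: "FO id_ftor = id"
  and FA_id_ftor [simp]: "FA id_ftor = id"
  by (simp_all add: id_ftor_def)

lemma FO_incl [simp]: "FO incl = id"
  and FA_incl [simp]: "FA incl = id"
  by (simp_all add: incl_def)

lemma full_subcat_simps [simp]:
  "Obj (full_subcat C B) = B" "Arr (full_subcat C B) = {f \<in> Arr C. Dom C f \<in> B \<and> Cod C f \<in> B}"
  "Dom (full_subcat C B) = Dom C" "Cod (full_subcat C B) = Cod C"
  "Ide (full_subcat C B) = Ide C" "Cmp (full_subcat C B) = Cmp C"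
  by (simp_all add: full_subcat_def)

lemma functor_into_full_subcat:
  assumes "is_functor C (full_subcat C B) F"
  shows "a \<in> Obj C \<Longrightarrow> FO F a \<in> B"
    and "f \<in> Arr C \<Longrightarrow> FA F f \<in> Arr C"
    and "f \<in> Arr C \<Longrightarrow> Dom C (FA F f) = FO F (Dom C f)"
    and "f \<in> Arr C \<Longrightarrow> Cod C (FA F f) = FO F (Cod C f)"
  using assms unfolding is_functor_def hom_def by auto

lemma comp_ftor_id_right [simp]: "F \<circ>\<^sub>F id_ftor = F"
  by (simp add: comp_ftor_def id_ftor_def)

lemma functor_comp:
  assumes F: "is_functor C D F" and G: "is_functor D E G"
  shows "is_functor C E (G \<circ>\<^sub>F F)"
proof -
  interpret F: cat_functor C D F using F by (rule cat_functor.intro)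
  interpret G: cat_functor D E G using G by (rule cat_functor.intro)
  show ?thesis
    unfolding is_functor_def
    by (auto simp: hom_def F.FA_Cmp G.FA_Cmp F.dom.is_category G.cod.is_category)
qed

lemma nat_trans_vcomp:
  assumes \<sigma>: "is_nat_trans C D F G \<sigma>" and \<tau>: "is_nat_trans C D G H \<tau>"
  shows "is_nat_trans C D F H (\<lambda>a. Cmp D (\<tau> a) (\<sigma> a))"
proof -
  interpret F: cat_functor C D F using \<sigma> unfolding is_nat_trans_def cat_functor_def by blast
  interpret G: cat_functor C D G using \<sigma> unfolding is_nat_trans_def cat_functor_def by blast
  interpret H: cat_functor C D H using \<tau> unfolding is_nat_trans_def cat_functor_def by blast
  have \<sigma>_arr [simp]: "\<sigma> a \<in> Arr D" "Dom D (\<sigma> a) = FO F a" "Cod D (\<sigma> a) = FO G a" if "a \<in> Obj C" for a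
    using \<sigma> that unfolding is_nat_trans_def hom_def by blast+
  have \<tau>_arr [simp]: "\<tau> a \<in> Arr D" "Dom D (\<tau> a) = FO G a" "Cod D (\<tau> a) = FO H a" if "a \<in> Obj C" for a
    using \<tau> that unfolding is_nat_trans_def hom_def by blast+
  have "Cmp D (Cmp D (\<tau> (Cod C f)) (\<sigma> (Cod C f))) (FA F f) = Cmp D (FA H f) (Cmp D (\<tau> (Dom C f)) (\<sigma> (Dom C f)))"
    if f: "f \<in> Arr C" for f
  proof -
    have "Cmp D (Cmp D (\<tau> (Cod C f)) (\<sigma> (Cod C f))) (FA F f) = Cmp D (\<tau> (Cod C f)) (Cmp D (FA G f) (\<sigma> (Dom C f)))"
      using f \<sigma> unfolding is_nat_trans_def by simp
    also have "\<dots> = Cmp D (Cmp D (\<tau> (Cod C f)) (FA G f)) (\<sigma> (Dom C f))"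
      using f by simp
    also have "\<dots> = Cmp D (FA H f) (Cmp D (\<tau> (Dom C f)) (\<sigma> (Dom C f)))"
      using f \<tau> unfolding is_nat_trans_def by simp
    finally show ?thesis .
  qed
  then show ?thesis
    using F.is_functor H.is_functor unfolding is_nat_trans_def hom_def by simp
qed

lemma nat_trans_whisker_left:
  assumes \<tau>: "is_nat_trans C D F G \<tau>" and H: "is_functor D E H"
  shows "is_nat_trans C E (H \<circ>\<^sub>F F) (H \<circ>\<^sub>F G) (whisker_left H \<tau>)"
proof -
  interpret F: cat_functor C D F using \<tau> unfolding is_nat_trans_def cat_functor_def by blast
  interpret G: cat_functor C D G using \<tau> unfolding is_nat_trans_def cat_functor_def by blast
  interpret H: cat_functor D E H using H by (rule cat_functor.intro)
  have \<tau>_arr [simp]: "\<tau> a \<in> Arr D" "Dom D (\<tau> a) = FO F a" "Cod D (\<tau> a) = FO G a" if "a \<in> Obj C" for a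
    using \<tau> that unfolding is_nat_trans_def hom_def by blast+
  have "Cmp E (FA H (\<tau> (Cod C f))) (FA H (FA F f)) = Cmp E (FA H (FA G f)) (FA H (\<tau> (Dom C f)))"
    if f: "f \<in> Arr C" for f
    using f \<tau> by (simp add: H.FA_Cmp[symmetric] is_nat_trans_def)
  then show ?thesis
    using functor_comp[OF F.is_functor H] functor_comp[OF G.is_functor H]
    unfolding is_nat_trans_def whisker_left_def hom_def by simp
qed

lemma nat_iso_inverse:
  assumes \<tau>: "is_nat_iso C D F G \<tau>"
  shows "is_nat_trans C D G F (\<lambda>a. inverse_arr D (\<tau> a))"
proof -
  interpret F: cat_functor C D F using \<tau> unfolding is_nat_iso_def is_nat_trans_def cat_functor_def by blast
  interpret G: cat_functor C D G using \<tau> unfolding is_nat_iso_def is_nat_trans_def cat_functor_def by blast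
  have iso [simp]: "is_iso D (\<tau> a)" if "a \<in> Obj C" for a
    using \<tau> that unfolding is_nat_iso_def by blast
  have \<tau>_arr [simp]: "\<tau> a \<in> Arr D" "Dom D (\<tau> a) = FO F a" "Cod D (\<tau> a) = FO G a" if "a \<in> Obj C" for a
    using \<tau> that unfolding is_nat_iso_def is_nat_trans_def hom_def by blast+
  have "Cmp D (inverse_arr D (\<tau> (Cod C f))) (FA G f) = Cmp D (FA F f) (inverse_arr D (\<tau> (Dom C f)))"
    if f: "f \<in> Arr C" for f
  proof -
    let ?a = "Dom C f" and ?b = "Cod C f"
    have nat: "Cmp D (\<tau> ?b) (FA F f) = Cmp D (FA G f) (\<tau> ?a)"
      using f \<tau> unfolding is_nat_iso_def is_nat_trans_def by blast
    have "Cmp D (inverse_arr D (\<tau> ?b)) (FA G f)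
        = Cmp D (inverse_arr D (\<tau> ?b)) (Cmp D (Cmp D (FA G f) (\<tau> ?a)) (inverse_arr D (\<tau> ?a)))"
      using f by simp
    also have "\<dots> = Cmp D (inverse_arr D (\<tau> ?b)) (Cmp D (Cmp D (\<tau> ?b) (FA F f)) (inverse_arr D (\<tau> ?a)))"
      by (simp only: nat)
    also have "\<dots> = Cmp D (FA F f) (inverse_arr D (\<tau> ?a))"
      using f by (simp flip: F.cod.Cmp_assoc)
    finally show ?thesis .
  qed
  then show ?thesis
    using F.is_functor G.is_functor unfolding is_nat_trans_def hom_def by simp
qed

locale idempotent_pointed_endofunctor =
  fixes C :: "('o, 'm) cat" and R :: "('o, 'm, 'o, 'm) ftor" and \<alpha> :: "'o \<Rightarrow> 'm"
  assumes point: "is_nat_trans C C id_ftor R \<alpha>"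
    and well_pointed: "c \<in> Obj C \<Longrightarrow> FA R (\<alpha> c) = \<alpha> (FO R c)"
    and idempotent: "c \<in> Obj C \<Longrightarrow> is_iso C (\<alpha> (FO R c))"
begin

sublocale cat_functor C C R
  using point unfolding is_nat_trans_def cat_functor_def by blast

lemma point_in_Arr [simp]: "c \<in> Obj C \<Longrightarrow> \<alpha> c \<in> Arr C"
  and Dom_point [simp]: "c \<in> Obj C \<Longrightarrow> Dom C (\<alpha> c) = c"
  and Cod_point [simp]: "c \<in> Obj C \<Longrightarrow> Cod C (\<alpha> c) = FO R c"
  using point unfolding is_nat_trans_def hom_def by auto

lemma point_natural: "f \<in> Arr C \<Longrightarrow> Cmp C (\<alpha> (Cod C f)) f = Cmp C (FA R f) (\<alpha> (Dom C f))"
  using point unfolding is_nat_trans_def by simp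

end

locale idempotent_copointed_endofunctor =
  fixes C :: "('o, 'm) cat" and L :: "('o, 'm, 'o, 'm) ftor" and \<epsilon> :: "'o \<Rightarrow> 'm"
  assumes copoint: "is_nat_trans C C L id_ftor \<epsilon>"
    and well_copointed: "c \<in> Obj C \<Longrightarrow> FA L (\<epsilon> c) = \<epsilon> (FO L c)"
    and idempotent: "c \<in> Obj C \<Longrightarrow> is_iso C (\<epsilon> (FO L c))"
begin

sublocale cat_functor C C L
  using copoint unfolding is_nat_trans_def cat_functor_def by blast

lemma copoint_in_Arr [simp]: "c \<in> Obj C \<Longrightarrow> \<epsilon> c \<in> Arr C"
  and Dom_copoint [simp]: "c \<in> Obj C \<Longrightarrow> Dom C (\<epsilon> c) = FO L c"
  and Cod_copoint [simp]: "c \<in> Obj C \<Longrightarrow> Cod C (\<epsilon> c) = c"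
  using copoint unfolding is_nat_trans_def hom_def by auto

lemma copoint_natural: "f \<in> Arr C \<Longrightarrow> Cmp C (\<epsilon> (Cod C f)) (FA L f) = Cmp C f (\<epsilon> (Dom C f))"
  using copoint unfolding is_nat_trans_def by simp

end

lemma reflection_idempotent_pointed:
  assumes B: "B \<subseteq> Obj C"
    and adj: "is_adjunction C (full_subcat C B) S incl \<alpha> \<beta>"
  shows "idempotent_pointed_endofunctor C (incl \<circ>\<^sub>F S) \<alpha>"
proof -
  interpret S: cat_functor C "full_subcat C B" S
    using adj unfolding is_adjunction_def cat_functor_def by blast
  have \<alpha>: "is_nat_trans C C id_ftor (incl \<circ>\<^sub>F S) \<alpha>"
    using adj unfolding is_adjunction_def by blast
  have [simp]: "b \<in> B \<Longrightarrow> b \<in> Obj C" for b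
    using B by blast
  note functor_into_full_subcat[OF S.is_functor, simp]
  have [simp]: "c \<in> Obj C \<Longrightarrow> \<alpha> c \<in> Arr C" "c \<in> Obj C \<Longrightarrow> Dom C (\<alpha> c) = c"
    "c \<in> Obj C \<Longrightarrow> Cod C (\<alpha> c) = FO S c" for c
    using \<alpha> unfolding is_nat_trans_def hom_def by auto
  have [simp]: "b \<in> B \<Longrightarrow> \<beta> b \<in> Arr C" "b \<in> B \<Longrightarrow> Dom C (\<beta> b) = FO S b"
    "b \<in> B \<Longrightarrow> Cod C (\<beta> b) = b" for b
    using adj unfolding is_adjunction_def is_nat_trans_def hom_def by auto
  have \<beta>_natural: "f \<in> Arr C \<Longrightarrow> Dom C f \<in> B \<Longrightarrow> Cod C f \<in> B \<Longrightarrow>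
      Cmp C (\<beta> (Cod C f)) (FA S f) = Cmp C f (\<beta> (Dom C f))" for f
    using adj unfolding is_adjunction_def is_nat_trans_def by auto
  have triangle: "c \<in> Obj C \<Longrightarrow> Cmp C (\<beta> (FO S c)) (FA S (\<alpha> c)) = Ide C (FO S c)"
    and \<beta>\<alpha>: "b \<in> B \<Longrightarrow> Cmp C (\<beta> b) (\<alpha> b) = Ide C b" for b c
    using adj unfolding is_adjunction_def by auto
  have \<alpha>\<beta>: "Cmp C (\<alpha> b) (\<beta> b) = Ide C (FO S b)" if b: "b \<in> B" for b
  proof -
    have "Cmp C (\<beta> (FO S b)) (FA S (\<alpha> b)) = Cmp C (\<alpha> b) (\<beta> b)"
      using \<beta>_natural[of "\<alpha> b"] b by simp
    then show ?thesis using triangle b by simp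
  qed
  show ?thesis
  proof
    show "is_nat_trans C C id_ftor (incl \<circ>\<^sub>F S) \<alpha>" by (fact \<alpha>)
  next
    fix c assume c: "c \<in> Obj C"
    show "is_iso C (\<alpha> (FO (incl \<circ>\<^sub>F S) c))"
      unfolding is_iso_def hom_def using c \<alpha>\<beta> \<beta>\<alpha> by (intro conjI bexI[of _ "\<beta> (FO S c)"]) auto
    have "FA S (\<alpha> c) = Cmp C (Cmp C (\<alpha> (FO S c)) (\<beta> (FO S c))) (FA S (\<alpha> c))"
      using c by (simp add: \<alpha>\<beta>)
    also have "\<dots> = \<alpha> (FO S c)"
      using c by (simp add: triangle)
    finally show "FA (incl \<circ>\<^sub>F S) (\<alpha> c) = \<alpha> (FO (incl \<circ>\<^sub>F S) c)" by simp
  qed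
qed

lemma coreflection_idempotent_copointed:
  assumes D: "D \<subseteq> Obj C"
    and adj: "is_adjunction (full_subcat C D) C incl T \<delta> \<epsilon>"
  shows "idempotent_copointed_endofunctor C (incl \<circ>\<^sub>F T) \<epsilon>"
proof -
  interpret T: cat_functor C "full_subcat C D" T
    using adj unfolding is_adjunction_def cat_functor_def by blast
  have \<epsilon>: "is_nat_trans C C (incl \<circ>\<^sub>F T) id_ftor \<epsilon>"
    using adj unfolding is_adjunction_def by blast
  have [simp]: "d \<in> D \<Longrightarrow> d \<in> Obj C" for d
    using D by blast
  note functor_into_full_subcat[OF T.is_functor, simp]
  have [simp]: "c \<in> Obj C \<Longrightarrow> \<epsilon> c \<in> Arr C" "c \<in> Obj C \<Longrightarrow> Dom C (\<epsilon> c) = FO T c"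
    "c \<in> Obj C \<Longrightarrow> Cod C (\<epsilon> c) = c" for c
    using \<epsilon> unfolding is_nat_trans_def hom_def by auto
  have [simp]: "d \<in> D \<Longrightarrow> \<delta> d \<in> Arr C" "d \<in> D \<Longrightarrow> Dom C (\<delta> d) = d"
    "d \<in> D \<Longrightarrow> Cod C (\<delta> d) = FO T d" for d
    using adj unfolding is_adjunction_def is_nat_trans_def hom_def by auto
  have \<delta>_natural: "f \<in> Arr C \<Longrightarrow> Dom C f \<in> D \<Longrightarrow> Cod C f \<in> D \<Longrightarrow>
      Cmp C (\<delta> (Cod C f)) f = Cmp C (FA T f) (\<delta> (Dom C f))" for f
    using adj unfolding is_adjunction_def is_nat_trans_def by auto
  have \<epsilon>\<delta>: "d \<in> D \<Longrightarrow> Cmp C (\<epsilon> d) (\<delta> d) = Ide C d"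
    and triangle: "c \<in> Obj C \<Longrightarrow> Cmp C (FA T (\<epsilon> c)) (\<delta> (FO T c)) = Ide C (FO T c)" for c d
    using adj unfolding is_adjunction_def by auto
  have \<delta>\<epsilon>: "Cmp C (\<delta> d) (\<epsilon> d) = Ide C (FO T d)" if d: "d \<in> D" for d
  proof -
    have "Cmp C (\<delta> d) (\<epsilon> d) = Cmp C (FA T (\<epsilon> d)) (\<delta> (FO T d))"
      using \<delta>_natural[of "\<epsilon> d"] d by simp
    then show ?thesis using triangle d by simp
  qed
  show ?thesis
  proof
    show "is_nat_trans C C (incl \<circ>\<^sub>F T) id_ftor \<epsilon>" by (fact \<epsilon>)
  next
    fix c assume c: "c \<in> Obj C"
    show "is_iso C (\<epsilon> (FO (incl \<circ>\<^sub>F T) c))"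
      unfolding is_iso_def hom_def using c \<delta>\<epsilon> \<epsilon>\<delta> by (intro conjI bexI[of _ "\<delta> (FO T c)"]) auto
    have "FA T (\<epsilon> c) = Cmp C (FA T (\<epsilon> c)) (Cmp C (\<delta> (FO T c)) (\<epsilon> (FO T c)))"
      using c by (simp add: \<delta>\<epsilon>)
    also have "\<dots> = \<epsilon> (FO T c)"
      using c by (simp add: triangle flip: T.dom.Cmp_assoc)
    finally show "FA (incl \<circ>\<^sub>F T) (\<epsilon> c) = \<epsilon> (FO (incl \<circ>\<^sub>F T) c)" by simp
  qed
qed

locale compatible_reflector_coreflector =
  R: idempotent_pointed_endofunctor C R \<alpha> + L: idempotent_copointed_endofunctor C L \<epsilon>
  for C :: "('o, 'm) cat" and R \<alpha> L \<epsilon> +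
  assumes R_copoint_iso [simp]: "c \<in> Obj C \<Longrightarrow> is_iso C (FA R (\<epsilon> c))"
    and L_point_iso [simp]: "c \<in> Obj C \<Longrightarrow> is_iso C (FA L (\<alpha> c))"
begin

definition adj_unit :: "'o \<Rightarrow> 'm" where
  "adj_unit c = Cmp C (inverse_arr C (FA R (\<epsilon> c))) (\<alpha> c)"

definition adj_counit :: "'o \<Rightarrow> 'm" where
  "adj_counit c = Cmp C (\<epsilon> c) (inverse_arr C (FA L (\<alpha> c)))"

lemma adj_unit_natural: "is_nat_trans C C id_ftor (R \<circ>\<^sub>F L) adj_unit"
proof -
  have "is_nat_iso C C (R \<circ>\<^sub>F L) R (whisker_left R \<epsilon>)"
    using nat_trans_whisker_left[OF L.copoint R.is_functor]
    unfolding is_nat_iso_def by (simp add: whisker_left_def)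
  from nat_trans_vcomp[OF R.point nat_iso_inverse[OF this]] show ?thesis
    by (simp add: adj_unit_def[abs_def] whisker_left_def)
qed

lemma adj_counit_natural: "is_nat_trans C C (L \<circ>\<^sub>F R) id_ftor adj_counit"
proof -
  have "is_nat_iso C C L (L \<circ>\<^sub>F R) (whisker_left L \<alpha>)"
    using nat_trans_whisker_left[OF R.point L.is_functor]
    unfolding is_nat_iso_def by (simp add: whisker_left_def)
  from nat_trans_vcomp[OF nat_iso_inverse[OF this] L.copoint] show ?thesis
    by (simp add: adj_counit_def[abs_def] whisker_left_def)
qed

declare R.well_pointed [simp] L.well_copointed [simp] R.idempotent [simp] L.idempotent [simp]

lemma counit_unit_triangle:
  assumes c: "c \<in> Obj C"
  shows "Cmp C (adj_counit (FO L c)) (FA L (adj_unit c)) = Ide C (FO L c)"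
proof -
  let ?e = "\<epsilon> (FO L c)"
  define W where "W = Cmp C (inverse_arr C (FA L (\<alpha> (FO L c))))
    (Cmp C (FA L (inverse_arr C (FA R (\<epsilon> c)))) (FA L (\<alpha> c)))"
  have W: "W \<in> Arr C" "Dom C W = FO L c" using c by (simp_all add: W_def)
  have "Cmp C (FA L (\<alpha> c)) ?e = FA L (Cmp C (\<alpha> c) (\<epsilon> c))"
    using c by (simp add: L.FA_Cmp)
  also have "\<dots> = FA L (Cmp C (FA R (\<epsilon> c)) (\<alpha> (FO L c)))"
    using c R.point_natural[of "\<epsilon> c"] by simp
  also have "\<dots> = Cmp C (FA L (FA R (\<epsilon> c))) (FA L (\<alpha> (FO L c)))"
    using c by (simp add: L.FA_Cmp)
  finally have \<alpha>\<epsilon>: "Cmp C (FA L (\<alpha> c)) ?e = Cmp C (FA L (FA R (\<epsilon> c))) (FA L (\<alpha> (FO L c)))" .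
  have L_inverse: "Cmp C (FA L (inverse_arr C (FA R (\<epsilon> c)))) (FA L (FA R (\<epsilon> c)))
      = Ide C (FO L (FO R (FO L c)))"
    using c by (simp flip: L.FA_Cmp)
  have "Cmp C W ?e = Cmp C (inverse_arr C (FA L (\<alpha> (FO L c))))
      (Cmp C (FA L (inverse_arr C (FA R (\<epsilon> c)))) (Cmp C (FA L (\<alpha> c)) ?e))"
    using c by (simp add: W_def)
  also have "\<dots> = Ide C (FO L (FO L c))"
    using c by (simp add: \<alpha>\<epsilon> L_inverse flip: R.dom.Cmp_assoc)
  finally have "W = inverse_arr C ?e"
    using c W by (intro R.dom.left_inverse_eq_inverse_arr) simp_all
  then have "Cmp C ?e W = Ide C (FO L c)" using c by simp
  then show ?thesis
    using c by (simp add: adj_counit_def adj_unit_def W_def L.FA_Cmp)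
qed

lemma unit_counit_triangle:
  assumes c: "c \<in> Obj C"
  shows "Cmp C (FA R (adj_counit c)) (adj_unit (FO R c)) = Ide C (FO R c)"
proof -
  let ?a = "\<alpha> (FO R c)"
  define V where "V = Cmp C (FA R (\<epsilon> c))
    (Cmp C (FA R (inverse_arr C (FA L (\<alpha> c)))) (inverse_arr C (FA R (\<epsilon> (FO R c)))))"
  have V: "V \<in> Arr C" "Cod C V = FO R c" using c by (simp_all add: V_def)
  have "Cmp C ?a (FA R (\<epsilon> c)) = FA R (Cmp C (\<alpha> c) (\<epsilon> c))"
    using c by (simp add: R.FA_Cmp)
  also have "\<dots> = FA R (Cmp C (\<epsilon> (FO R c)) (FA L (\<alpha> c)))"
    using c L.copoint_natural[of "\<alpha> c"] by simp
  also have "\<dots> = Cmp C (FA R (\<epsilon> (FO R c))) (FA R (FA L (\<alpha> c)))"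
    using c by (simp add: R.FA_Cmp)
  finally have \<alpha>\<epsilon>: "Cmp C ?a (FA R (\<epsilon> c)) = Cmp C (FA R (\<epsilon> (FO R c))) (FA R (FA L (\<alpha> c)))" .
  have R_inverse: "Cmp C (FA R (FA L (\<alpha> c))) (FA R (inverse_arr C (FA L (\<alpha> c))))
      = Ide C (FO R (FO L (FO R c)))"
    using c by (simp flip: R.FA_Cmp)
  have "Cmp C ?a V = Cmp C (Cmp C (Cmp C ?a (FA R (\<epsilon> c))) (FA R (inverse_arr C (FA L (\<alpha> c)))))
      (inverse_arr C (FA R (\<epsilon> (FO R c))))"
    using c by (simp add: V_def)
  also have "\<dots> = Ide C (FO R (FO R c))"
    using c by (simp add: \<alpha>\<epsilon> R_inverse)
  finally have "V = inverse_arr C ?a"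
    using c V by (intro R.dom.right_inverse_eq_inverse_arr) simp_all
  then have "Cmp C V ?a = Ide C (FO R c)" using c by simp
  then show ?thesis
    using c by (simp add: adj_counit_def adj_unit_def V_def R.FA_Cmp)
qed

lemma is_adjunction: "is_adjunction C C L R adj_unit adj_counit"
  unfolding is_adjunction_def
  using L.is_functor R.is_functor adj_unit_natural adj_counit_natural
    counit_unit_triangle unit_counit_triangle by simp

end

theorem theoremA3:
  fixes C :: "('o, 'm) cat"
    and B D :: "'o set"
    and S T :: "('o, 'm, 'o, 'm) ftor"
    and \<alpha> \<beta> \<delta> \<epsilon> :: "'o \<Rightarrow> 'm"
  assumes "is_category C"
    and "B \<subseteq> Obj C"
    and "D \<subseteq> Obj C"
    and "is_adjunction C (full_subcat C B) S incl \<alpha> \<beta>"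
    and "is_adjunction (full_subcat C D) C incl T \<delta> \<epsilon>"
    and "is_nat_iso C C (incl \<circ>\<^sub>F S \<circ>\<^sub>F incl \<circ>\<^sub>F T) (incl \<circ>\<^sub>F S)
           (whisker_left (incl \<circ>\<^sub>F S) \<epsilon>)"
    and "is_nat_iso C C (incl \<circ>\<^sub>F T) (incl \<circ>\<^sub>F T \<circ>\<^sub>F incl \<circ>\<^sub>F S)
           (whisker_left (incl \<circ>\<^sub>F T) \<alpha>)"
  shows "\<exists>\<eta> \<epsilon>'. is_adjunction C C (incl \<circ>\<^sub>F T) (incl \<circ>\<^sub>F S) \<eta> \<epsilon>'"
proof -
  interpret compatible_reflector_coreflector C "incl \<circ>\<^sub>F S" \<alpha> "incl \<circ>\<^sub>F T" \<epsilon>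
  proof (intro compatible_reflector_coreflector.intro compatible_reflector_coreflector_axioms.intro)
    show "idempotent_pointed_endofunctor C (incl \<circ>\<^sub>F S) \<alpha>"
      using assms(2,4) by (rule reflection_idempotent_pointed)
    show "idempotent_copointed_endofunctor C (incl \<circ>\<^sub>F T) \<epsilon>"
      using assms(3,5) by (rule coreflection_idempotent_copointed)
    show "is_iso C (FA (incl \<circ>\<^sub>F S) (\<epsilon> c))" "is_iso C (FA (incl \<circ>\<^sub>F T) (\<alpha> c))"
      if "c \<in> Obj C" for c
      using assms(6,7) that unfolding is_nat_iso_def whisker_left_def by blast+
  qed
  show ?thesis using is_adjunction by blast
qed

end
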